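(* The MPB rule $M$ satisfies: (a) splitting monotonicity: for every instance $I$ and every $p\in W_M(I)$, if $I'$ is obtained from $I$ by replacing $p$ with a set $P'$ of new projects with $c(P')=c(p)$ and replacing every $A_i$ containing $p$ by $(A_i\setminus\{p\})\cup P'$, then $W_M(I')\cap P'\ne\emptyset$; (b) merging monotonicity: for every instance $I$, every $S\in M(I)$ and every $P'\subseteq S$ with $A_i\cap P'\in\{P',\emptyset\}$ for every voter $i$, if $I'$ is obtained from $I$ by merging the projects of $P'$ into a single new project $p$ with cost $c(P')$ and replacing every $A_i$ containing $P'$ by $(A_i\setminus P')\cup\{p\}$, then $p\in W_M(I')$; (c) weak exhaustiveness: for every instance $I$, every $S\in M(I)$ and every $p\in P\setminus S$ with $c(S)+c(p)\le b$, we have $S\cup\{p\}\in M(I)$.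
   Context: A PB instance is $I=\langle N,P,c,b,\mathcal{A}\rangle$ with voters $N=\{1,\dots,n\}$, projects $P$, costs $c:P\to\mathbb{N}$, budget $b\in\mathbb{N}$, and approval sets $A_i\subseteq P$. $c(S)=\sum_{p\in S}c(p)$; $S$ is feasible if $c(S)\le b$; $u_i(S)=c(S\cap A_i)$. A PB rule $R$ maps each instance to a set $R(I)$ of feasible subsets of $P$. The MPB rule $M$ outputs $M(I)$, the set of all feasible $S$ maximizing $\min_{i\in N}u_i(S)$ among feasible sets. For a rule $R$, $W_R(I)=\{p\in P:\exists S\in R(I),\ p\in S\}$ is the set of winning projects. *)

theory Defs
  imports Main
begin

definition pb_instance :: "nat \<Rightarrow> 'a set \<Rightarrow> ('a \<Rightarrow> nat) \<Rightarrow> nat \<Rightarrow> (nat \<Rightarrow> 'a set) \<Rightarrow> bool" where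
  "pb_instance n P c b A \<longleftrightarrow> finite P \<and> (\<forall>i\<in>{1..n}. A i \<subseteq> P)"

definition cost :: "('a \<Rightarrow> nat) \<Rightarrow> 'a set \<Rightarrow> nat" where
  "cost c S = (\<Sum>p\<in>S. c p)"

definition feasible :: "'a set \<Rightarrow> ('a \<Rightarrow> nat) \<Rightarrow> nat \<Rightarrow> 'a set \<Rightarrow> bool" where
  "feasible P c b S \<longleftrightarrow> S \<subseteq> P \<and> cost c S \<le> b"

definition util :: "('a \<Rightarrow> nat) \<Rightarrow> (nat \<Rightarrow> 'a set) \<Rightarrow> nat \<Rightarrow> 'a set \<Rightarrow> nat" where
  "util c A i S = cost c (S \<inter> A i)"

definition min_util :: "nat \<Rightarrow> ('a \<Rightarrow> nat) \<Rightarrow> (nat \<Rightarrow> 'a set) \<Rightarrow> 'a set \<Rightarrow> nat" where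
  "min_util n c A S = Min ((\<lambda>i. util c A i S) ` {1..n})"

definition MPB :: "nat \<Rightarrow> 'a set \<Rightarrow> ('a \<Rightarrow> nat) \<Rightarrow> nat \<Rightarrow> (nat \<Rightarrow> 'a set) \<Rightarrow> 'a set set" where
  "MPB n P c b A = {S. feasible P c b S \<and>
      (\<forall>T. feasible P c b T \<longrightarrow> min_util n c A T \<le> min_util n c A S)}"

definition winners :: "'a set set \<Rightarrow> 'a set" where
  "winners R = {p. \<exists>S\<in>R. p \<in> S}"

end

theory Submission
  imports Defs
begin

text \<open>Replacing a project p by new projects P' of the same total cost maps every feasible set
of an instance to a feasible set of the split instance with the same cost and the same utility
for every voter. An optimal set of the split instance either meets P' or is itself feasible
for the original instance; in the latter case both optimal values coincide, so the image of an
optimal set containing p is optimal. Merging P' into p is splitting read backwards, and then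
every set of the merged instance has an image of the same value, so merging an optimal set
gives an optimal set. Weak exhaustiveness holds because adding a project never lowers a
utility.\<close>

definition replace :: "'a \<Rightarrow> 'a set \<Rightarrow> 'a set \<Rightarrow> 'a set" where
  "replace p P' X = (if p \<in> X then (X - {p}) \<union> P' else X)"

definition same_cost_and_utils ::
    "nat \<Rightarrow> ('a \<Rightarrow> nat) \<Rightarrow> (nat \<Rightarrow> 'a set) \<Rightarrow> 'a set \<Rightarrow>
     ('b \<Rightarrow> nat) \<Rightarrow> (nat \<Rightarrow> 'b set) \<Rightarrow> 'b set \<Rightarrow> bool" where
  "same_cost_and_utils n c A S c' A' S' \<longleftrightarrow>
     cost c S = cost c' S' \<and> (\<forall>i\<in>{1..n}. util c A i S = util c' A' i S')"

lemma same_cost_and_utils_sym: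
  "same_cost_and_utils n c A S c' A' S' \<Longrightarrow> same_cost_and_utils n c' A' S' c A S"
  by (simp add: same_cost_and_utils_def)

lemma min_util_eq_if_same_cost_and_utils:
  "same_cost_and_utils n c A S c' A' S' \<Longrightarrow> min_util n c A S = min_util n c' A' S'"
  unfolding same_cost_and_utils_def min_util_def by (auto intro: image_cong)

lemma min_util_mono:
  assumes "\<And>i. i \<in> {1..n} \<Longrightarrow> util c A i S \<le> util c A i T"
  shows "min_util n c A S \<le> min_util n c A T"
proof (cases "n = 0")
  case False
  have "Min ((\<lambda>i. util c A i S) ` {1..n}) \<le> util c A i T" if "i \<in> {1..n}" for i
    using that assms[OF that] by (meson Min_le finite_atLeastAtMost finite_imageI image_eqI le_trans)
  then show ?thesis
    using False unfolding min_util_def by (intro Min.boundedI) auto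
qed (simp add: min_util_def)

lemma cost_mono: "finite Y \<Longrightarrow> X \<subseteq> Y \<Longrightarrow> cost c X \<le> cost c Y"
  unfolding cost_def by (rule sum_mono2) auto

lemma cost_insert: "finite X \<Longrightarrow> p \<notin> X \<Longrightarrow> cost c (insert p X) = c p + cost c X"
  unfolding cost_def by simp

lemma cost_replace:
  assumes "finite X" "finite P'" "P' \<inter> X = {}"
    and "\<forall>q\<in>X - {p}. c' q = c q" and "cost c' P' = c p"
  shows "cost c' (replace p P' X) = cost c X"
proof -
  have agree: "cost c' (X - {p}) = cost c (X - {p})"
    unfolding cost_def using assms(4) by (intro sum.cong) auto
  show ?thesis
  proof (cases "p \<in> X")
    case True
    have "cost c' ((X - {p}) \<union> P') = cost c' (X - {p}) + cost c' P'"
      unfolding cost_def using assms(1-3) by (intro sum.union_disjoint) auto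
    also have "\<dots> = cost c (insert p (X - {p}))"
      using agree assms(1,5) cost_insert[of "X - {p}" p c] by simp
    finally show ?thesis using True by (simp add: replace_def insert_absorb)
  qed (use agree in \<open>simp add: replace_def\<close>)
qed

lemma replace_Int:
  "P' \<inter> X = {} \<Longrightarrow> P' \<inter> Y = {} \<Longrightarrow> replace p P' X \<inter> replace p P' Y = replace p P' (X \<inter> Y)"
  unfolding replace_def by auto

lemma MPB_nonempty:
  assumes "finite P"
  shows "MPB n P c b A \<noteq> {}"
proof -
  define F where "F = {T. feasible P c b T}"
  have "finite F"
    unfolding F_def feasible_def using assms by (auto intro: finite_subset[of _ "Pow P"])
  moreover have "{} \<in> F"
    unfolding F_def feasible_def cost_def by simp
  ultimately have "Max (min_util n c A ` F) \<in> min_util n c A ` F"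
    by (intro Max_in) auto
  then obtain T where "T \<in> F" "min_util n c A T = Max (min_util n c A ` F)"
    by auto
  then have "T \<in> MPB n P c b A"
    using \<open>finite F\<close> unfolding MPB_def F_def by auto
  then show ?thesis by auto
qed

text \<open>T0 witnesses that the optimal value of the second instance is at most that of the
first, and S' attains the latter.\<close>

lemma MPB_transfer:
  assumes S: "S \<in> MPB n P c b A" and T: "T \<in> MPB n Q c' b A'"
    and "T0 \<subseteq> P" "same_cost_and_utils n c A T0 c' A' T"
    and "S' \<subseteq> Q" "same_cost_and_utils n c A S c' A' S'"
  shows "S' \<in> MPB n Q c' b A'"
proof -
  have "feasible P c b T0"
    using assms(3,4) T by (simp add: MPB_def feasible_def same_cost_and_utils_def)
  then have "min_util n c A T0 \<le> min_util n c A S"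
    using S by (simp add: MPB_def)
  then have "min_util n c' A' T \<le> min_util n c' A' S'"
    using assms(4,6) by (simp add: min_util_eq_if_same_cost_and_utils)
  moreover have "feasible Q c' b S'"
    using assms(5,6) S by (simp add: MPB_def feasible_def same_cost_and_utils_def)
  ultimately show ?thesis
    using T unfolding MPB_def by (auto intro: order.trans)
qed

definition split_instance ::
    "nat \<Rightarrow> 'a set \<Rightarrow> ('a \<Rightarrow> nat) \<Rightarrow> (nat \<Rightarrow> 'a set) \<Rightarrow> 'a \<Rightarrow> 'a set \<Rightarrow>
     ('a \<Rightarrow> nat) \<Rightarrow> (nat \<Rightarrow> 'a set) \<Rightarrow> bool" where
  "split_instance n P c A p P' c' A' \<longleftrightarrow>
     finite P' \<and> P' \<inter> P = {} \<and> (\<forall>q\<in>P - {p}. c' q = c q) \<and> cost c' P' = c p \<and>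
     (\<forall>i\<in>{1..n}. A' i = replace p P' (A i))"

lemma same_cost_and_utils_split:
  assumes inst: "pb_instance n P c b A" and split: "split_instance n P c A p P' c' A'"
    and "X \<subseteq> P"
  shows "same_cost_and_utils n c A X c' A' (replace p P' X)"
  unfolding same_cost_and_utils_def util_def
proof (intro conjI ballI)
  have "finite X"
    using inst \<open>X \<subseteq> P\<close> by (auto simp: pb_instance_def intro: finite_subset)
  have cost_replace': "cost c' (replace p P' Y) = cost c Y" if "Y \<subseteq> X" for Y
    using split that \<open>X \<subseteq> P\<close> \<open>finite X\<close>
    by (intro cost_replace) (auto simp: split_instance_def intro: finite_subset)
  show "cost c X = cost c' (replace p P' X)"
    using cost_replace'[of X] by simp
  fix i assume "i \<in> {1..n}"
  then have "A' i = replace p P' (A i)" "A i \<subseteq> P"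
    using inst split by (auto simp: pb_instance_def split_instance_def)
  moreover have "P' \<inter> X = {}" "P' \<inter> A i = {}"
    using split \<open>X \<subseteq> P\<close> \<open>A i \<subseteq> P\<close> by (auto simp: split_instance_def)
  ultimately have "replace p P' X \<inter> A' i = replace p P' (X \<inter> A i)"
    by (simp add: replace_Int)
  then show "cost c (X \<inter> A i) = cost c' (replace p P' X \<inter> A' i)"
    using cost_replace'[of "X \<inter> A i"] by simp
qed

lemma MPB_split:
  assumes inst: "pb_instance n P c b A" and split: "split_instance n P c A p P' c' A'"
    and S: "S \<in> MPB n P c b A"
    and T: "T \<in> MPB n ((P - {p}) \<union> P') c' b A'" and "T \<inter> P' = {}"
  shows "replace p P' S \<in> MPB n ((P - {p}) \<union> P') c' b A'"
proof -
  have "T \<subseteq> P" "p \<notin> T" "S \<subseteq> P"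
    using T S \<open>T \<inter> P' = {}\<close> by (auto simp: MPB_def feasible_def)
  moreover from this have "replace p P' T = T" "replace p P' S \<subseteq> (P - {p}) \<union> P'"
    by (auto simp: replace_def)
  ultimately show ?thesis
    using MPB_transfer[OF S T] same_cost_and_utils_split[OF inst split] by metis
qed

lemma MPB_unsplit:
  assumes inst: "pb_instance n P c b A" and split: "split_instance n P c A p P' c' A'"
    and "S \<subseteq> P" and S': "replace p P' S \<in> MPB n ((P - {p}) \<union> P') c' b A'"
  shows "S \<in> MPB n P c b A"
proof -
  have "finite P"
    using inst by (simp add: pb_instance_def)
  then obtain T where T: "T \<in> MPB n P c b A"
    using MPB_nonempty[of P n c b A] by blast
  have "T \<subseteq> P"
    using T by (simp add: MPB_def feasible_def)
  then have "replace p P' T \<subseteq> (P - {p}) \<union> P'"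
    by (auto simp: replace_def)
  then show ?thesis
    using MPB_transfer[OF S' T _ _ \<open>S \<subseteq> P\<close>] \<open>T \<subseteq> P\<close> \<open>S \<subseteq> P\<close>
      same_cost_and_utils_split[OF inst split] same_cost_and_utils_sym by metis
qed

lemma MPB_splitting_monotone:
  assumes inst: "pb_instance n P c b A" and win: "p \<in> winners (MPB n P c b A)"
    and "finite P'" "P' \<noteq> {}" "P' \<inter> P = {}"
    and c': "\<forall>q\<in>P - {p}. c' q = c q" "cost c' P' = c p"
    and A': "\<forall>i\<in>{1..n}. A' i = (if p \<in> A i then (A i - {p}) \<union> P' else A i)"
  shows "winners (MPB n ((P - {p}) \<union> P') c' b A') \<inter> P' \<noteq> {}"
proof -
  let ?Q = "(P - {p}) \<union> P'"
  have split: "split_instance n P c A p P' c' A'"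
    using \<open>finite P'\<close> \<open>P' \<inter> P = {}\<close> c' A' by (simp add: split_instance_def replace_def)
  obtain S where S: "S \<in> MPB n P c b A" "p \<in> S"
    using win by (auto simp: winners_def)
  have "finite ?Q"
    using inst \<open>finite P'\<close> by (simp add: pb_instance_def)
  then obtain T where T: "T \<in> MPB n ?Q c' b A'"
    using MPB_nonempty[of ?Q n c' b A'] by blast
  show ?thesis
  proof (cases "T \<inter> P' = {}")
    case True
    then have "replace p P' S \<in> MPB n ?Q c' b A'"
      using MPB_split[OF inst split S(1) T] by blast
    moreover have "P' \<subseteq> replace p P' S"
      using S(2) by (simp add: replace_def)
    ultimately show ?thesis
      using \<open>P' \<noteq> {}\<close> by (auto simp: winners_def)
  next
    case False
    then show ?thesis
      using T unfolding winners_def by blast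
  qed
qed

lemma merged_instance:
  assumes inst: "pb_instance n P c b A" and "P' \<subseteq> P" and "p \<notin> P"
    and agree: "\<forall>i\<in>{1..n}. A i \<inter> P' = P' \<or> A i \<inter> P' = {}"
    and c': "c' p = cost c P'" "\<forall>q\<in>P - P'. c' q = c q"
    and A': "\<forall>i\<in>{1..n}. A' i = (if P' \<subseteq> A i then (A i - P') \<union> {p} else A i)"
  shows "pb_instance n ((P - P') \<union> {p}) c' b A'"
    and "split_instance n ((P - P') \<union> {p}) c' A' p P' c A"
proof -
  have "finite P" and AP: "\<forall>i\<in>{1..n}. A i \<subseteq> P"
    using inst by (auto simp: pb_instance_def)
  have approvals: "A' i \<subseteq> (P - P') \<union> {p} \<and> A i = replace p P' (A' i)" if "i \<in> {1..n}" for i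
  proof -
    have "A' i = (if P' \<subseteq> A i then (A i - P') \<union> {p} else A i)"
      "A i \<inter> P' = P' \<or> A i \<inter> P' = {}" "A i \<subseteq> P"
      using that A' agree AP by auto
    then show ?thesis
      using \<open>P' \<subseteq> P\<close> \<open>p \<notin> P\<close> by (auto simp: replace_def)
  qed
  show "pb_instance n ((P - P') \<union> {p}) c' b A'"
    using \<open>finite P\<close> approvals by (simp add: pb_instance_def)
  show "split_instance n ((P - P') \<union> {p}) c' A' p P' c A"
    using \<open>finite P\<close> \<open>P' \<subseteq> P\<close> \<open>p \<notin> P\<close> c' approvals
    by (auto simp: split_instance_def intro: finite_subset)
qed

lemma MPB_merging_monotone:
  assumes inst: "pb_instance n P c b A" and S: "S \<in> MPB n P c b A" and "P' \<subseteq> S"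
    and agree: "\<forall>i\<in>{1..n}. A i \<inter> P' = P' \<or> A i \<inter> P' = {}"
    and "p \<notin> P" and c': "c' p = cost c P'" "\<forall>q\<in>P - P'. c' q = c q"
    and A': "\<forall>i\<in>{1..n}. A' i = (if P' \<subseteq> A i then (A i - P') \<union> {p} else A i)"
  shows "p \<in> winners (MPB n ((P - P') \<union> {p}) c' b A')"
proof -
  let ?Q = "(P - P') \<union> {p}"
  have "S \<subseteq> P"
    using S by (simp add: MPB_def feasible_def)
  have "P' \<subseteq> P"
    using \<open>P' \<subseteq> S\<close> \<open>S \<subseteq> P\<close> by blast
  note merged = merged_instance[OF inst \<open>P' \<subseteq> P\<close> \<open>p \<notin> P\<close> agree c' A']
  have "(?Q - {p}) \<union> P' = P" "replace p P' (S - P' \<union> {p}) = S"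
    using \<open>P' \<subseteq> S\<close> \<open>S \<subseteq> P\<close> \<open>p \<notin> P\<close> by (auto simp: replace_def)
  moreover have "S - P' \<union> {p} \<subseteq> ?Q"
    using \<open>S \<subseteq> P\<close> by blast
  ultimately have "S - P' \<union> {p} \<in> MPB n ?Q c' b A'"
    using MPB_unsplit[OF merged] S by metis
  then show ?thesis
    by (auto simp: winners_def)
qed

lemma MPB_weakly_exhaustive:
  assumes inst: "pb_instance n P c b A" and S: "S \<in> MPB n P c b A"
    and p: "p \<in> P - S" and budget: "cost c S + c p \<le> b"
  shows "insert p S \<in> MPB n P c b A"
proof -
  have "S \<subseteq> P" "finite P"
    using S inst by (auto simp: MPB_def feasible_def pb_instance_def)
  then have "finite S"
    by (rule finite_subset)
  then have "feasible P c b (insert p S)"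
    using \<open>S \<subseteq> P\<close> p budget by (simp add: feasible_def cost_insert)
  moreover have "min_util n c A S \<le> min_util n c A (insert p S)"
  proof (rule min_util_mono)
    fix i
    show "util c A i S \<le> util c A i (insert p S)"
      unfolding util_def using \<open>finite S\<close> by (intro cost_mono) auto
  qed
  ultimately show ?thesis
    using S unfolding MPB_def by (auto intro: order.trans)
qed

theorem theorem6:
  shows
  \<comment> \<open>(a) splitting monotonicity\<close>
  "(\<forall>(n::nat) (P::'a set) c b A p P' c' A'.
      pb_instance n P c b A \<and> p \<in> winners (MPB n P c b A) \<and>
      finite P' \<and> P' \<noteq> {} \<and> P' \<inter> P = {} \<and>
      (\<forall>q\<in>P - {p}. c' q = c q) \<and> cost c' P' = c p \<and>
      (\<forall>i\<in>{1..n}. A' i = (if p \<in> A i then (A i - {p}) \<union> P' else A i))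
      \<longrightarrow> winners (MPB n ((P - {p}) \<union> P') c' b A') \<inter> P' \<noteq> {})
   \<and>
  \<comment> \<open>(b) merging monotonicity\<close>
   (\<forall>(n::nat) (P::'a set) c b A S P' p c' A'.
      pb_instance n P c b A \<and> S \<in> MPB n P c b A \<and> P' \<subseteq> S \<and>
      (\<forall>i\<in>{1..n}. A i \<inter> P' = P' \<or> A i \<inter> P' = {}) \<and>
      p \<notin> P \<and> c' p = cost c P' \<and> (\<forall>q\<in>P - P'. c' q = c q) \<and>
      (\<forall>i\<in>{1..n}. A' i = (if P' \<subseteq> A i then (A i - P') \<union> {p} else A i))
      \<longrightarrow> p \<in> winners (MPB n ((P - P') \<union> {p}) c' b A'))
   \<and>
  \<comment> \<open>(c) weak exhaustiveness\<close>
   (\<forall>(n::nat) (P::'a set) c b A S p.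
      pb_instance n P c b A \<and> S \<in> MPB n P c b A \<and> p \<in> P - S \<and>
      cost c S + c p \<le> b
      \<longrightarrow> insert p S \<in> MPB n P c b A)"
proof (intro conjI allI impI; elim conjE)
qed (rule MPB_splitting_monotone MPB_merging_monotone MPB_weakly_exhaustive; assumption)+

end
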